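(* Let $\Omega\subset\mathbb R^d$ be compact and let $m\ge2$ be an integer. Then the set of restrictions to $\Omega$ of the maps $$\mathbf x\mapsto\mathbf W^T\boldsymbol\sigma(\mathbf W\mathbf x),\qquad p\in\mathbb N,\ \mathbf W\in\mathbb R^{p\times d},\ \sigma_i\in\mathcal{LS}^m_{\uparrow}(\mathbb R),$$ is dense in $\mathcal E(\Omega)$ with respect to the norm $\|\mathbf f\|_{C(\Omega)}=\sup_{\mathbf x\in\Omega}\|\mathbf f(\mathbf x)\|$.
   Context: $\boldsymbol\sigma$ acts componentwise: $(\boldsymbol\sigma(\mathbf z))_i=\sigma_i(z_i)$. $\mathcal{LS}^m_{\uparrow}(\mathbb R)$ is the set of increasing continuous piecewise-linear functions (linear splines) $\mathbb R\to\mathbb R$ with at most $m$ knots. $C^{0,1}_{\uparrow}(\mathbb R)$ denotes the set of Lipschitz-continuous increasing functions $\mathbb R\to\mathbb R$. $\mathcal E(\mathbb R^d)$ is the set of maps $\mathbf x\mapsto\mathbf W^T\boldsymbol\sigma(\mathbf W\mathbf x)$ with $p\in\mathbb N$, $\mathbf W\in\mathbb R^{p\times d}$ and each $\sigma_i\in C^{0,1}_{\uparrow}(\mathbb R)$; $\mathcal E(\Omega)$ is the set of restrictions to $\Omega$ of elements of $\mathcal E(\mathbb R^d)$. *)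

theory Defs
  imports "HOL-Analysis.Analysis"
begin

definition lip_incr :: "(real \<Rightarrow> real) \<Rightarrow> bool" where
  "lip_incr s \<longleftrightarrow> mono s \<and> (\<exists>C. C-lipschitz_on UNIV s)"

text \<open>Increasing continuous piecewise-linear functions with at most m knots:
  there is a finite knot set K, card K \<le> m, such that s is affine on every
  open interval not meeting K.\<close>
definition lin_spline_incr :: "nat \<Rightarrow> (real \<Rightarrow> real) \<Rightarrow> bool" where
  "lin_spline_incr m s \<longleftrightarrow> mono s \<and> continuous_on UNIV s \<and>
     (\<exists>K. finite K \<and> card K \<le> m \<and>
        (\<forall>a b. {a<..<b} \<inter> K = {} \<longrightarrow>
            (\<exists>c0 c1. \<forall>x\<in>{a<..<b}. s x = c0 + c1 * x)))"

text \<open>Maps x |-> W^T sigma(W x) with W in R^(p x d) given by its rows w 0..w (p-1)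
  (so W^T sigma(W x) = sum_i sigma_i(w_i . x) w_i), each sigma_i satisfying P.\<close>
definition expansive_maps :: "((real \<Rightarrow> real) \<Rightarrow> bool) \<Rightarrow> (real^'d::finite \<Rightarrow> real^'d) set" where
  "expansive_maps P = {(\<lambda>x. \<Sum>i<p. \<sigma> i (w i \<bullet> x) *\<^sub>R w i) | (p::nat) w \<sigma>.
       (\<forall>i<p. P (\<sigma> i))}"

end

theory Submission
  imports Defs
begin

(* Each profile sigma_i is increasing and uniformly continuous, so on the bounded range of
   w_i . x over Omega it is uniformly close to its piecewise-linear interpolant on a fine grid.
   That interpolant is a constant plus nonnegative multiples of ramps, each an increasing spline
   with two knots, and a sum of profiles along a single direction w is again an expansive map,
   obtained by repeating the row w. If every profile is approximated within delta, the error of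
   the assembled map is at most delta * (sum_i |w_i|). *)

definition ramp :: "real \<Rightarrow> real \<Rightarrow> real \<Rightarrow> real" where
  "ramp u v t = (min (max t u) v - u) / (v - u)"

lemma ramp_eq_0: "u \<le> v \<Longrightarrow> t \<le> u \<Longrightarrow> ramp u v t = 0"
  by (simp add: ramp_def)

lemma ramp_eq_1: "u < v \<Longrightarrow> v \<le> t \<Longrightarrow> ramp u v t = 1"
  by (simp add: ramp_def)

lemma ramp_bounds:
  assumes "u < v"
  shows "0 \<le> ramp u v t" "ramp u v t \<le> 1"
  using assms by (auto simp: ramp_def divide_le_eq_1)

lemma mono_ramp: "u < v \<Longrightarrow> mono (ramp u v)"
  by (auto simp: mono_def ramp_def intro!: divide_right_mono)

lemma ramp_affine_between_knots:
  assumes "u < v" "{a<..<b} \<inter> {u, v} = {}"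
  shows "\<exists>c0 c1. \<forall>x\<in>{a<..<b}. ramp u v x = c0 + c1 * x"
proof -
  consider "b \<le> u" | "v \<le> a" | "u \<le> a" "b \<le> v"
    using assms(2) by (metis Int_iff empty_iff greaterThanLessThan_iff insert_iff not_le)
  then show ?thesis
  proof cases
    case 1
    then show ?thesis
      using assms(1) by (auto simp: ramp_eq_0 intro!: exI[of _ 0])
  next
    case 2
    then show ?thesis
      using assms(1) by (intro exI[of _ 1] exI[of _ 0]) (force intro: ramp_eq_1)
  next
    case 3
    then have "\<forall>x\<in>{a<..<b}. ramp u v x = - u / (v - u) + 1 / (v - u) * x"
      by (auto simp: ramp_def diff_divide_distrib)
    then show ?thesis by blast
  qed
qed

lemma lin_spline_incr_scaled_ramp:
  assumes "u < v" "c \<ge> 0"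
  shows "lin_spline_incr 2 (\<lambda>t. c * ramp u v t)"
  unfolding lin_spline_incr_def
proof (intro conjI exI[of _ "{u, v}"] allI impI)
  show "mono (\<lambda>t. c * ramp u v t)"
    using mono_ramp[OF assms(1)] assms(2) by (auto simp: mono_def intro: mult_left_mono)
  show "continuous_on UNIV (\<lambda>t. c * ramp u v t)"
    using assms(1) unfolding ramp_def by (intro continuous_intros) auto
  show "card {u, v} \<le> 2"
    by (simp add: card_insert_le_m1)
  fix a b assume "{a<..<b} \<inter> {u, v} = {}"
  then obtain c0 c1 where "\<forall>x\<in>{a<..<b}. ramp u v x = c0 + c1 * x"
    using ramp_affine_between_knots[OF assms(1)] by blast
  then show "\<exists>c0 c1. \<forall>x\<in>{a<..<b}. c * ramp u v x = c0 + c1 * x"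
    by (intro exI[of _ "c * c0"] exI[of _ "c * c1"]) (simp add: algebra_simps)
qed simp

lemma lin_spline_incr_const: "lin_spline_incr m (\<lambda>_. c)"
  unfolding lin_spline_incr_def
proof (intro conjI exI[of _ "{}"] allI impI)
  show "\<exists>c0 c1. \<forall>x\<in>{a<..<b}. c = c0 + c1 * x" for a b :: real
    by (intro exI[of _ c] exI[of _ 0]) simp
qed (simp_all add: mono_def)

lemma lin_spline_incr_mono_knots: "lin_spline_incr m s \<Longrightarrow> m \<le> n \<Longrightarrow> lin_spline_incr n s"
  unfolding lin_spline_incr_def by (meson order_trans)

definition sums_of :: "(('a \<Rightarrow> 'b::comm_monoid_add) \<Rightarrow> bool) \<Rightarrow> ('a \<Rightarrow> 'b) set" where
  "sums_of P = {(\<lambda>t. \<Sum>j<n. \<tau> j t) | (n::nat) \<tau>. \<forall>j<n. P (\<tau> j)}"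

lemma sums_of_zero: "(\<lambda>_. 0) \<in> sums_of P"
  unfolding sums_of_def by (intro CollectI exI[of _ "0::nat"]) simp

lemma sums_of_add:
  assumes "g \<in> sums_of P" "P s"
  shows "(\<lambda>t. g t + s t) \<in> sums_of P"
proof -
  obtain n :: nat and \<tau> where g: "g = (\<lambda>t. \<Sum>j<n. \<tau> j t)" and \<tau>: "\<forall>j<n. P (\<tau> j)"
    using assms(1) unfolding sums_of_def by blast
  have "(\<lambda>t. g t + s t) = (\<lambda>t. \<Sum>j<Suc n. (\<tau>(n := s)) j t)"
    by (simp add: g)
  moreover have "\<forall>j<Suc n. P ((\<tau>(n := s)) j)"
    using \<tau> assms(2) by (simp add: less_Suc_eq)
  ultimately show ?thesis
    unfolding sums_of_def by blast
qed

lemma sums_of_single: "P s \<Longrightarrow> s \<in> sums_of P"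
  using sums_of_add[OF sums_of_zero, of P s] by simp

lemma expansive_maps_mono:
  "(\<And>s. P s \<Longrightarrow> Q s) \<Longrightarrow> expansive_maps P \<subseteq> expansive_maps Q"
  unfolding expansive_maps_def by blast

lemma expansive_maps_zero: "(\<lambda>_. 0) \<in> expansive_maps P"
  unfolding expansive_maps_def by (intro CollectI exI[of _ "0::nat"]) simp

lemma expansive_maps_add:
  assumes "F \<in> expansive_maps P" "G \<in> expansive_maps P"
  shows "(\<lambda>x. F x + G x) \<in> expansive_maps P"
proof -
  obtain p :: nat and v \<sigma> where F: "F = (\<lambda>x. \<Sum>i<p. \<sigma> i (v i \<bullet> x) *\<^sub>R v i)"
    and \<sigma>: "\<forall>i<p. P (\<sigma> i)"
    using assms(1) unfolding expansive_maps_def by blast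
  obtain q :: nat and u \<tau> where G: "G = (\<lambda>x. \<Sum>i<q. \<tau> i (u i \<bullet> x) *\<^sub>R u i)"
    and \<tau>: "\<forall>i<q. P (\<tau> i)"
    using assms(2) unfolding expansive_maps_def by blast
  define w where "w i = (if i < p then v i else u (i - p))" for i
  define \<rho> where "\<rho> i = (if i < p then \<sigma> i else \<tau> (i - p))" for i
  have "(\<lambda>x. F x + G x) = (\<lambda>x. \<Sum>i<p + q. \<rho> i (w i \<bullet> x) *\<^sub>R w i)"
  proof
    fix x
    have concat: "(\<Sum>i<p + q. h i) = (\<Sum>i<p. h i) + (\<Sum>i<q. h (i + p))"
      for h :: "nat \<Rightarrow> real^'a"
      using sum.atLeastLessThan_concat[of 0 p "p + q" h] sum.shift_bounds_nat_ivl[of h 0 p q]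
      by (simp add: atLeast0LessThan add.commute)
    show "F x + G x = (\<Sum>i<p + q. \<rho> i (w i \<bullet> x) *\<^sub>R w i)"
      by (simp add: concat F G w_def \<rho>_def)
  qed
  moreover have "\<forall>i<p + q. P (\<rho> i)"
    using \<sigma> \<tau> by (simp add: \<rho>_def)
  ultimately show ?thesis
    unfolding expansive_maps_def by blast
qed

lemma expansive_maps_sum:
  fixes p :: nat
  shows "(\<And>i. i < p \<Longrightarrow> F i \<in> expansive_maps P) \<Longrightarrow> (\<lambda>x. \<Sum>i<p. F i x) \<in> expansive_maps P"
  by (induction p) (simp_all add: expansive_maps_zero expansive_maps_add)

lemma expansive_maps_ridge:
  assumes "g \<in> sums_of P"
  shows "(\<lambda>x. g (w \<bullet> x) *\<^sub>R w) \<in> expansive_maps P"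
proof -
  obtain n :: nat and \<tau> where g: "g = (\<lambda>t. \<Sum>j<n. \<tau> j t)" and \<tau>: "\<forall>j<n. P (\<tau> j)"
    using assms unfolding sums_of_def by blast
  show ?thesis
    unfolding expansive_maps_def g using \<tau>
    by (intro CollectI exI[of _ n] exI[of _ "\<lambda>_. w"] exI[of _ \<tau>]) (simp add: scaleR_sum_left)
qed

lemma interpolation_step:
  fixes \<sigma> g :: "real \<Rightarrow> real"
  assumes "mono \<sigma>" "u < v" "\<sigma> v - \<sigma> u \<le> \<delta>"
    and "\<forall>t\<in>{a..u}. \<bar>\<sigma> t - g t\<bar> \<le> \<delta>" "\<forall>t\<ge>u. g t = \<sigma> u"
  shows "\<forall>t\<in>{a..v}. \<bar>\<sigma> t - (g t + (\<sigma> v - \<sigma> u) * ramp u v t)\<bar> \<le> \<delta>"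
    and "\<forall>t\<ge>v. g t + (\<sigma> v - \<sigma> u) * ramp u v t = \<sigma> v"
proof -
  define g' where "g' t = g t + (\<sigma> v - \<sigma> u) * ramp u v t" for t
  have "\<bar>\<sigma> t - g' t\<bar> \<le> \<delta>" if "t \<in> {a..v}" for t
  proof (cases "t \<le> u")
    case True
    then show ?thesis
      using assms(2,4) that by (simp add: g'_def ramp_eq_0)
  next
    case False
    then have "\<sigma> u \<le> \<sigma> t" "\<sigma> t \<le> \<sigma> v"
      using assms(1) that by (auto simp: mono_def)
    moreover have "g' t = \<sigma> u + (\<sigma> v - \<sigma> u) * ramp u v t"
      using False assms(5) by (simp add: g'_def)
    moreover have "0 \<le> (\<sigma> v - \<sigma> u) * ramp u v t" "(\<sigma> v - \<sigma> u) * ramp u v t \<le> \<sigma> v - \<sigma> u"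
      using ramp_bounds[OF assms(2)] \<open>\<sigma> u \<le> \<sigma> t\<close> \<open>\<sigma> t \<le> \<sigma> v\<close>
      by (simp_all add: mult_left_le)
    ultimately show ?thesis
      using assms(3) by linarith
  qed
  then show "\<forall>t\<in>{a..v}. \<bar>\<sigma> t - (g t + (\<sigma> v - \<sigma> u) * ramp u v t)\<bar> \<le> \<delta>"
    by (simp add: g'_def)
  show "\<forall>t\<ge>v. g t + (\<sigma> v - \<sigma> u) * ramp u v t = \<sigma> v"
    using assms(2,5) by (simp add: g'_def ramp_eq_1)
qed

lemma mono_approx_by_spline_sums:
  fixes \<sigma> :: "real \<Rightarrow> real"
  assumes "mono \<sigma>" "uniformly_continuous_on UNIV \<sigma>" "\<delta> > 0"
  shows "\<exists>g\<in>sums_of (lin_spline_incr 2). \<forall>t\<in>{a..b}. \<bar>\<sigma> t - g t\<bar> \<le> \<delta>"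
proof -
  obtain d where "d > 0" and "\<forall>t\<in>UNIV. \<forall>s\<in>UNIV. dist s t < d \<longrightarrow> dist (\<sigma> s) (\<sigma> t) < \<delta>"
    using assms(2,3) unfolding uniformly_continuous_on_def by blast
  then have osc: "\<bar>\<sigma> s - \<sigma> t\<bar> < \<delta>" if "\<bar>s - t\<bar> < d" for s t
    using that by (simp add: dist_real_def)
  define h where "h = d / 2"
  have "h > 0" "h < d"
    using \<open>d > 0\<close> by (simp_all add: h_def)
  \<comment> \<open>g interpolates \<sigma> at a, a + h, ..., a + k h and is constant from there on\<close>
  have grid: "\<exists>g\<in>sums_of (lin_spline_incr 2). (\<forall>t\<in>{a..a + real k * h}. \<bar>\<sigma> t - g t\<bar> \<le> \<delta>)
      \<and> (\<forall>t\<ge>a + real k * h. g t = \<sigma> (a + real k * h))" for k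
  proof (induction k)
    case 0
    have "(\<lambda>_. \<sigma> a) \<in> sums_of (lin_spline_incr 2)"
      by (intro sums_of_single lin_spline_incr_const)
    then show ?case
      using assms(3) by (intro bexI[of _ "\<lambda>_. \<sigma> a"]) auto
  next
    case (Suc k)
    define u where "u = a + real k * h"
    define v where "v = a + real (Suc k) * h"
    obtain g where g: "g \<in> sums_of (lin_spline_incr 2)"
      "\<forall>t\<in>{a..u}. \<bar>\<sigma> t - g t\<bar> \<le> \<delta>" "\<forall>t\<ge>u. g t = \<sigma> u"
      using Suc.IH unfolding u_def by blast
    have "v - u = h"
      by (simp add: u_def v_def algebra_simps)
    then have "u < v"
      using \<open>h > 0\<close> by simp
    have "\<sigma> v - \<sigma> u \<le> \<delta>"
      using osc[of v u] \<open>v - u = h\<close> \<open>h < d\<close> \<open>h > 0\<close> by simp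
    note step = interpolation_step[of \<sigma> u v \<delta> a g, OF assms(1) \<open>u < v\<close> this g(2,3)]
    have "\<sigma> u \<le> \<sigma> v"
      using assms(1) \<open>u < v\<close> by (simp add: monoD)
    then have "lin_spline_incr 2 (\<lambda>t. (\<sigma> v - \<sigma> u) * ramp u v t)"
      using \<open>u < v\<close> by (intro lin_spline_incr_scaled_ramp) simp_all
    with step sums_of_add[OF g(1), OF this] show ?case
      unfolding v_def[symmetric]
      by (intro bexI[of _ "\<lambda>t. g t + (\<sigma> v - \<sigma> u) * ramp u v t"]) simp_all
  qed
  obtain k :: nat where "(b - a) / h < k"
    using reals_Archimedean2 by blast
  then have "b \<le> a + real k * h"
    using \<open>h > 0\<close> by (simp add: field_simps)
  moreover obtain g where "g \<in> sums_of (lin_spline_incr 2)"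
    "\<forall>t\<in>{a..a + real k * h}. \<bar>\<sigma> t - g t\<bar> \<le> \<delta>"
    using grid by blast
  ultimately show ?thesis
    by (intro bexI[of _ g]) auto
qed

lemma norm_ridge_sum_diff_le:
  fixes w :: "nat \<Rightarrow> 'a::real_inner"
  assumes "norm x \<le> R"
    and "\<And>i. i < p \<Longrightarrow> \<forall>t\<in>{-(norm (w i) * R)..norm (w i) * R}. \<bar>\<sigma> i t - \<tau> i t\<bar> \<le> \<delta>"
  shows "norm ((\<Sum>i<p. \<sigma> i (w i \<bullet> x) *\<^sub>R w i) - (\<Sum>i<p. \<tau> i (w i \<bullet> x) *\<^sub>R w i))
    \<le> \<delta> * (\<Sum>i<p. norm (w i))"
proof -
  have err: "\<bar>\<sigma> i (w i \<bullet> x) - \<tau> i (w i \<bullet> x)\<bar> \<le> \<delta>" if "i < p" for i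
  proof -
    have "\<bar>w i \<bullet> x\<bar> \<le> norm (w i) * norm x"
      by (rule Cauchy_Schwarz_ineq2)
    also have "\<dots> \<le> norm (w i) * R"
      using assms(1) by (simp add: mult_left_mono)
    finally show ?thesis
      using assms(2)[OF that] by (simp add: abs_le_iff)
  qed
  have "norm ((\<Sum>i<p. \<sigma> i (w i \<bullet> x) *\<^sub>R w i) - (\<Sum>i<p. \<tau> i (w i \<bullet> x) *\<^sub>R w i))
      = norm (\<Sum>i<p. (\<sigma> i (w i \<bullet> x) - \<tau> i (w i \<bullet> x)) *\<^sub>R w i)"
    by (simp add: sum_subtractf scaleR_diff_left)
  also have "\<dots> \<le> (\<Sum>i<p. \<bar>\<sigma> i (w i \<bullet> x) - \<tau> i (w i \<bullet> x)\<bar> * norm (w i))"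
    by (rule order_trans[OF norm_sum]) simp
  also have "\<dots> \<le> (\<Sum>i<p. \<delta> * norm (w i))"
    using err by (intro sum_mono mult_right_mono) auto
  finally show ?thesis
    by (simp add: sum_distrib_left)
qed

lemma ridge_sum_approx_by_spline_ridges:
  fixes w :: "nat \<Rightarrow> real^'d"
  assumes "\<forall>i<p. lip_incr (\<sigma> i)" "bounded \<Omega>" "\<epsilon> > 0"
  shows "\<exists>g\<in>expansive_maps (lin_spline_incr 2).
           \<forall>x\<in>\<Omega>. norm ((\<Sum>i<p. \<sigma> i (w i \<bullet> x) *\<^sub>R w i) - g x) < \<epsilon>"
proof -
  obtain R where R: "\<forall>x\<in>\<Omega>. norm x \<le> R"
    using assms(2) unfolding bounded_iff by blast
  define \<delta> where "\<delta> = \<epsilon> / ((\<Sum>i<p. norm (w i)) + 1)"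
  have "(\<Sum>i<p. norm (w i)) \<ge> 0"
    by (simp add: sum_nonneg)
  then have "\<delta> > 0" "\<delta> * (\<Sum>i<p. norm (w i)) < \<epsilon>"
    using assms(3) by (simp_all add: \<delta>_def field_simps)
  have "\<exists>g\<in>sums_of (lin_spline_incr 2). \<forall>t\<in>{-(norm (w i) * R)..norm (w i) * R}. \<bar>\<sigma> i t - g t\<bar> \<le> \<delta>"
    if "i < p" for i
    using assms(1) that \<open>\<delta> > 0\<close>
    by (intro mono_approx_by_spline_sums) (auto simp: lip_incr_def lipschitz_on_uniformly_continuous)
  then obtain G where G: "\<And>i. i < p \<Longrightarrow> G i \<in> sums_of (lin_spline_incr 2)"
    "\<And>i. i < p \<Longrightarrow> \<forall>t\<in>{-(norm (w i) * R)..norm (w i) * R}. \<bar>\<sigma> i t - G i t\<bar> \<le> \<delta>"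
    by metis
  define g where "g x = (\<Sum>i<p. G i (w i \<bullet> x) *\<^sub>R w i)" for x
  have "g \<in> expansive_maps (lin_spline_incr 2)"
    unfolding g_def by (intro expansive_maps_sum expansive_maps_ridge G(1))
  moreover have "norm ((\<Sum>i<p. \<sigma> i (w i \<bullet> x) *\<^sub>R w i) - g x) < \<epsilon>" if "x \<in> \<Omega>" for x
    using norm_ridge_sum_diff_le[of x R p w \<sigma> G \<delta>] R that G(2) \<open>\<delta> * (\<Sum>i<p. norm (w i)) < \<epsilon>\<close>
    unfolding g_def by fastforce
  ultimately show ?thesis
    by blast
qed

theorem proposition4:
  fixes \<Omega> :: "(real^'d) set" and m :: nat and f :: "real^'d \<Rightarrow> real^'d"
  assumes "compact \<Omega>" and "m \<ge> 2" and "f \<in> expansive_maps lip_incr"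
  shows "\<forall>\<epsilon>>0. \<exists>g \<in> expansive_maps (lin_spline_incr m).
           (\<forall>x\<in>\<Omega>. norm (f x - g x) < \<epsilon>)"
proof (intro allI impI)
  fix \<epsilon> :: real assume "\<epsilon> > 0"
  obtain p :: nat and w \<sigma> where f: "f = (\<lambda>x. \<Sum>i<p. \<sigma> i (w i \<bullet> x) *\<^sub>R w i)"
    and \<sigma>: "\<forall>i<p. lip_incr (\<sigma> i)"
    using assms(3) unfolding expansive_maps_def by blast
  obtain g where "g \<in> expansive_maps (lin_spline_incr 2)" "\<forall>x\<in>\<Omega>. norm (f x - g x) < \<epsilon>"
    using ridge_sum_approx_by_spline_ridges[OF \<sigma> compact_imp_bounded[OF assms(1)] \<open>\<epsilon> > 0\<close>]
    unfolding f by blast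
  moreover have "expansive_maps (lin_spline_incr 2) \<subseteq> expansive_maps (lin_spline_incr m)"
    using expansive_maps_mono lin_spline_incr_mono_knots assms(2) by blast
  ultimately show "\<exists>g \<in> expansive_maps (lin_spline_incr m). \<forall>x\<in>\<Omega>. norm (f x - g x) < \<epsilon>"
    by blast
qed

end
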